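(* For every $k\geq2$ and all integers $d_1,\dots,d_k\geq3$, $$R_{d_1,\dots,d_k}(W_{d_1}\otimes\cdots\otimes W_{d_k})\leq 2^{k-1}(d_1+\cdots+d_k).$$
   Context: Identify $S^d\mathbb{C}^2$ with binary forms of degree $d$ in a basis $\{x,y\}$; $W_d=x^{d-1}y$. The partially symmetric rank $R_{d_1,\dots,d_k}(T)$ of $T\in S^{d_1}\mathbb{C}^2\otimes\cdots\otimes S^{d_k}\mathbb{C}^2$ is the minimal $r$ such that $T=\sum_{i=1}^r v_{i,1}^{\otimes d_1}\otimes\cdots\otimes v_{i,k}^{\otimes d_k}$ with $v_{i,j}\in\mathbb{C}^2$. *)

theory Defs
  imports Complex_Main
begin

text \<open>An element of S^{d_0} C^2 (x) ... (x) S^{d_{k-1}} C^2 is identified with a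
multihomogeneous polynomial (function) in k pairs of variables (x j, y j), j < k.
The tensor v_0^{(x)d_0} (x) ... (x) v_{k-1}^{(x)d_{k-1}} with v_j = (a j, b j)
corresponds to the product of the binary forms (a j * x j + b j * y j)^(d j).\<close>

definition ps_decomposable ::
  "nat \<Rightarrow> (nat \<Rightarrow> nat) \<Rightarrow> ((nat \<Rightarrow> complex) \<Rightarrow> (nat \<Rightarrow> complex) \<Rightarrow> complex) \<Rightarrow> nat \<Rightarrow> bool" where
  "ps_decomposable k d T r \<longleftrightarrow>
     (\<exists>a b :: nat \<Rightarrow> nat \<Rightarrow> complex.
        \<forall>x y. T x y = (\<Sum>i<r. \<Prod>j<k. (a i j * x j + b i j * y j) ^ d j))"

definition ps_rank ::
  "nat \<Rightarrow> (nat \<Rightarrow> nat) \<Rightarrow> ((nat \<Rightarrow> complex) \<Rightarrow> (nat \<Rightarrow> complex) \<Rightarrow> complex) \<Rightarrow> nat" where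
  "ps_rank k d T = (LEAST r. ps_decomposable k d T r)"

definition W_form :: "nat \<Rightarrow> complex \<Rightarrow> complex \<Rightarrow> complex" where
  "W_form d x y = x ^ (d - 1) * y"

definition W_tensor :: "nat \<Rightarrow> (nat \<Rightarrow> nat) \<Rightarrow> (nat \<Rightarrow> complex) \<Rightarrow> (nat \<Rightarrow> complex) \<Rightarrow> complex" where
  "W_tensor k d x y = (\<Prod>j<k. W_form (d j) (x j) (y j))"

end

theory Submission
  imports Defs "HOL-Computational_Algebra.Polynomial"
begin

(* For each j, (x_j + s y_j)^(d_j) - (x_j - s y_j)^(d_j) = s R_j(s) with R_j an even polynomial
   and R_j(0) = 2 d_j x_j^(d_j - 1) y_j. Hence B = R_1 ... R_k is even, has degree at most D - k
   where D = d_1 + ... + d_k, and its constant term is 2^k d_1 ... d_k times the tensor.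
   If 2N > D - k, averaging B over the 2N-th roots of unity returns that constant term, and by
   evenness the N powers of z = exp (i pi / N) suffice. Expanding
   s^k B(s) = prod_j ((x_j + s y_j)^(d_j) - (x_j - s y_j)^(d_j)) over the 2^k sign patterns writes
   the tensor as a combination of N 2^k products of powers of linear forms, and each scalar is
   absorbed by a d_1-th root. For N = (D - k) div 2 + 1 this gives the bound 2^k N <= 2^(k-1) D;
   only k >= 2 and d_j >= 1 are used. *)

lemma ex_complex_nth_root: "n > 0 \<Longrightarrow> \<exists>z::complex. z ^ n = c"
proof (cases "c = 0")
  case False
  assume "n > 0"
  then have "{z::complex. z ^ n = c} \<noteq> {}"
    using card_nth_roots[OF False] by (metis card.empty less_irrefl)
  then show ?thesis
    by auto
qed auto

lemma ps_rank_le: "ps_decomposable k d T r \<Longrightarrow> ps_rank k d T \<le> r"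
  unfolding ps_rank_def by (rule Least_le)

text \<open>Each weight c e is absorbed into the first linear form as a d 0-th root.\<close>
lemma ps_decomposable_weighted_sum:
  fixes T :: "(nat \<Rightarrow> complex) \<Rightarrow> (nat \<Rightarrow> complex) \<Rightarrow> complex"
    and c :: "'e \<Rightarrow> complex" and \<beta> :: "'e \<Rightarrow> nat \<Rightarrow> complex"
  assumes "finite E" and "k > 0" and "d 0 > 0"
    and T: "\<And>x y. T x y = (\<Sum>e\<in>E. c e * (\<Prod>j<k. (x j + \<beta> e j * y j) ^ d j))"
  shows "ps_decomposable k d T (card E)"
proof -
  obtain h where h: "bij_betw h {..<card E} E"
    using ex_bij_betw_nat_finite[OF \<open>finite E\<close>] by (auto simp: atLeast0LessThan)
  have "\<forall>e. \<exists>z. z ^ d 0 = c e"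
    using ex_complex_nth_root[OF \<open>d 0 > 0\<close>] by blast
  then obtain \<rho> where \<rho>: "\<And>e. \<rho> e ^ d 0 = c e"
    by metis
  define \<mu> where "\<mu> i j = (if j = 0 then \<rho> (h i) else 1)" for i j :: nat
  have factor: "(\<Prod>j<k. (\<mu> i j * x j + \<mu> i j * \<beta> (h i) j * y j) ^ d j)
      = c (h i) * (\<Prod>j<k. (x j + \<beta> (h i) j * y j) ^ d j)" for i and x y :: "nat \<Rightarrow> complex"
  proof -
    have "(\<Prod>j<k. (\<mu> i j * x j + \<mu> i j * \<beta> (h i) j * y j) ^ d j)
        = (\<Prod>j<k. \<mu> i j ^ d j * (x j + \<beta> (h i) j * y j) ^ d j)"
      by (simp add: power_mult_distrib[symmetric] distrib_left mult.assoc)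
    also have "\<dots> = (\<Prod>j<k. \<mu> i j ^ d j) * (\<Prod>j<k. (x j + \<beta> (h i) j * y j) ^ d j)"
      by (rule prod.distrib)
    also have "(\<Prod>j<k. \<mu> i j ^ d j) = (\<Prod>j<k. if j = 0 then \<rho> (h i) ^ d j else 1)"
      by (intro prod.cong) (simp_all add: \<mu>_def)
    also have "\<dots> = \<rho> (h i) ^ d 0"
      using \<open>k > 0\<close> by (simp add: prod.delta)
    finally show ?thesis by (simp add: \<rho>)
  qed
  have decomposition: "T x y = (\<Sum>i<card E. \<Prod>j<k. (\<mu> i j * x j + \<mu> i j * \<beta> (h i) j * y j) ^ d j)" for x y
    unfolding T factor by (rule sum.reindex_bij_betw[OF h, symmetric])
  show ?thesis
    unfolding ps_decomposable_def
    by (intro exI[of _ \<mu>] exI[of _ "\<lambda>i j. \<mu> i j * \<beta> (h i) j"] allI) (rule decomposition)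
qed

lemma coeff_1_linear_poly_power:
  fixes a b :: "'a::comm_semiring_1"
  shows "coeff ([:a, b:] ^ n) 1 = of_nat n * a ^ (n - 1) * b"
proof (induction n)
  case (Suc n)
  then show ?case
    by (cases n) (simp_all add: coeff_mult coeff_0_power algebra_simps)
qed simp

definition odd_quotient :: "'a \<Rightarrow> 'a \<Rightarrow> nat \<Rightarrow> 'a::comm_ring_1 poly" where
  "odd_quotient x y d = poly_shift 1 ([:x, y:] ^ d - [:x, - y:] ^ d)"

lemma pCons_0_odd_quotient: "pCons 0 (odd_quotient x y d) = [:x, y:] ^ d - [:x, - y:] ^ d"
proof -
  have "coeff ([:x, y:] ^ d - [:x, - y:] ^ d) 0 = 0"
    by (simp add: coeff_0_power)
  then show ?thesis
    by (auto simp: poly_eq_iff coeff_pCons odd_quotient_def coeff_poly_shift split: nat.split)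
qed

lemma poly_odd_quotient: "s * poly (odd_quotient x y d) s = (x + s * y) ^ d - (x - s * y) ^ d"
proof -
  have "s * poly (odd_quotient x y d) s = poly (pCons 0 (odd_quotient x y d)) s"
    by simp
  then show ?thesis
    unfolding pCons_0_odd_quotient by (simp add: poly_power algebra_simps)
qed

lemma degree_odd_quotient: "degree (odd_quotient x y d) \<le> d - 1"
proof -
  have "degree (pCons 0 (odd_quotient x y d)) \<le> d"
    unfolding pCons_0_odd_quotient
    by (intro degree_diff_le order.trans[OF degree_power_le]) simp_all
  then show ?thesis
    by (cases "odd_quotient x y d = 0") auto
qed

lemma coeff_0_odd_quotient: "coeff (odd_quotient x y d) 0 = 2 * of_nat d * x ^ (d - 1) * y"
proof -
  have "coeff (odd_quotient x y d) 0 = coeff (pCons 0 (odd_quotient x y d)) 1"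
    by simp
  then show ?thesis
    using coeff_1_linear_poly_power[of x y d] coeff_1_linear_poly_power[of x "- y" d]
    unfolding pCons_0_odd_quotient by simp
qed

lemma poly_odd_quotient_minus:
  fixes x y :: "'a::idom"
  shows "poly (odd_quotient x y d) (- s) = poly (odd_quotient x y d) s"
proof (cases "s = 0")
  case False
  have "- s * poly (odd_quotient x y d) (- s) = (x - s * y) ^ d - (x + s * y) ^ d"
    using poly_odd_quotient[of "- s" x y d] by simp
  also have "\<dots> = - (s * poly (odd_quotient x y d) s)"
    by (metis minus_diff_eq poly_odd_quotient)
  finally show ?thesis
    using False by simp
qed simp

lemma cis_root_unity_power_neq_1:
  assumes "0 < i" and "i < M"
  shows "cis (2 * pi / real M) ^ i \<noteq> 1"
proof
  assume "cis (2 * pi / real M) ^ i = 1"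
  then have eq: "cis (2 * pi * real i / real M) = cis (2 * pi * real 0 / real M)"
    by (simp add: DeMoivre mult_ac)
  have inj: "inj_on (\<lambda>k. cis (2 * pi * real k / real M)) {..<M}"
    using bij_betw_roots_unity[of M] assms by (simp add: bij_betw_def)
  have "i = 0"
    by (rule inj_onD[OF inj eq]) (use assms in auto)
  with assms show False
    by simp
qed

lemma sum_roots_unity_poly:
  fixes B :: "complex poly"
  assumes "degree B < M"
  shows "(\<Sum>m<M. poly B (cis (2 * pi / real M) ^ m)) = of_nat M * coeff B 0"
proof -
  define z where "z = cis (2 * pi / real M)"
  have "z ^ M = 1"
    using assms by (simp add: z_def DeMoivre)
  have power_sum: "(\<Sum>m<M. (z ^ i) ^ m) = (if i = 0 then of_nat M else 0)" if "i \<le> degree B" for i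
  proof (cases "i = 0")
    case False
    have "z ^ i \<noteq> 1"
      using cis_root_unity_power_neq_1[of i M] False that assms by (simp add: z_def)
    moreover have "(z ^ i) ^ M = 1"
      by (metis \<open>z ^ M = 1\<close> power_mult power_one mult.commute)
    ultimately show ?thesis
      using False geometric_sum[of "z ^ i" M] by simp
  qed simp
  have "(\<Sum>m<M. poly B (z ^ m)) = (\<Sum>m<M. \<Sum>i\<le>degree B. coeff B i * (z ^ i) ^ m)"
    by (simp add: poly_altdef power_mult[symmetric] mult.commute)
  also have "\<dots> = (\<Sum>i\<le>degree B. coeff B i * (\<Sum>m<M. (z ^ i) ^ m))"
    by (subst sum.swap) (simp add: sum_distrib_left)
  also have "\<dots> = (\<Sum>i\<le>degree B. if i = 0 then coeff B 0 * of_nat M else 0)"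
    by (intro sum.cong refl) (simp add: power_sum)
  also have "\<dots> = of_nat M * coeff B 0"
    by (simp add: sum.delta)
  finally show ?thesis
    unfolding z_def .
qed

lemma sum_half_roots_unity_even_poly:
  fixes B :: "complex poly"
  assumes "degree B < 2 * N" and even: "\<And>s. poly B (- s) = poly B s"
  shows "(\<Sum>m<N. poly B (cis (pi / real N) ^ m)) = of_nat N * coeff B 0"
proof -
  define z where "z = cis (pi / real N)"
  have "N > 0"
    using assms by simp
  then have "z ^ N = - 1"
    by (simp add: z_def DeMoivre)
  have "(\<Sum>m<2 * N. poly B (z ^ m)) = (\<Sum>m<N. poly B (z ^ m)) + (\<Sum>m\<in>{N..<N + N}. poly B (z ^ m))"
    using sum.atLeastLessThan_concat[of 0 N "N + N" "\<lambda>m. poly B (z ^ m)"]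
    by (simp add: atLeast0LessThan mult_2)
  also have "(\<Sum>m\<in>{N..<N + N}. poly B (z ^ m)) = (\<Sum>m<N. poly B (z ^ (m + N)))"
    using sum.shift_bounds_nat_ivl[of "\<lambda>m. poly B (z ^ m)" 0 N N] by (simp add: atLeast0LessThan)
  also have "\<dots> = (\<Sum>m<N. poly B (z ^ m))"
    by (simp add: power_add \<open>z ^ N = - 1\<close> even)
  finally have "(\<Sum>m<2 * N. poly B (z ^ m)) = 2 * (\<Sum>m<N. poly B (z ^ m))"
    by simp
  moreover have "(\<Sum>m<2 * N. poly B (z ^ m)) = of_nat (2 * N) * coeff B 0"
    using sum_roots_unity_poly[OF assms(1)] by (simp add: z_def)
  ultimately show ?thesis
    unfolding z_def by simp
qed

definition subset_sign :: "'a set \<Rightarrow> 'a \<Rightarrow> 'b::comm_ring_1" where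
  "subset_sign S j = (if j \<in> S then 1 else - 1)"

lemma prod_diff_eq_sum_subset_signs:
  fixes F :: "'a \<Rightarrow> 'b \<Rightarrow> 'b::comm_ring_1"
  assumes "finite A"
  shows "(\<Prod>j\<in>A. F j 1 - F j (- 1))
    = (\<Sum>S\<in>Pow A. (\<Prod>j\<in>A. subset_sign S j) * (\<Prod>j\<in>A. F j (subset_sign S j)))"
proof -
  have "(\<Prod>j\<in>A. F j 1 - F j (- 1)) = (\<Sum>S\<in>Pow A. (\<Prod>j\<in>S. F j 1) * (\<Prod>j\<in>A - S. - F j (- 1)))"
    using prod_add[OF assms, of "\<lambda>j. F j 1" "\<lambda>j. - F j (- 1)"] by simp
  also have "\<dots> = (\<Sum>S\<in>Pow A. (\<Prod>j\<in>A. subset_sign S j * F j (subset_sign S j)))"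
  proof (rule sum.cong[OF refl])
    fix S assume "S \<in> Pow A"
    then show "(\<Prod>j\<in>S. F j 1) * (\<Prod>j\<in>A - S. - F j (- 1))
        = (\<Prod>j\<in>A. subset_sign S j * F j (subset_sign S j))"
      using assms by (simp add: prod.subset_diff[of S A] subset_sign_def mult.commute)
  qed
  finally show ?thesis
    by (simp add: prod.distrib)
qed

lemma degree_prod_odd_quotient:
  assumes "\<And>j. j < k \<Longrightarrow> d j > 0"
  shows "degree (\<Prod>j<k. odd_quotient (x j) (y j) (d j)) \<le> (\<Sum>j<k. d j) - k"
proof -
  have "degree (\<Prod>j<k. odd_quotient (x j) (y j) (d j)) \<le> (\<Sum>j<k. degree (odd_quotient (x j) (y j) (d j)))"
    using degree_prod_sum_le[of "{..<k}"] by (simp add: comp_def)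
  also have "\<dots> \<le> (\<Sum>j<k. d j - 1)"
    by (intro sum_mono degree_odd_quotient)
  also have "\<dots> = (\<Sum>j<k. d j) - k"
    using assms sum_subtractf_nat[of "{..<k}" "\<lambda>_. 1" d] by (simp add: Suc_le_eq)
  finally show ?thesis .
qed

lemma coeff_0_prod_odd_quotient:
  "coeff (\<Prod>j<k. odd_quotient (x j) (y j) (d j)) 0 = 2 ^ k * (\<Prod>j<k. of_nat (d j)) * W_tensor k d x y"
proof -
  have "coeff (\<Prod>j<k. odd_quotient (x j) (y j) (d j)) 0 = (\<Prod>j<k. coeff (odd_quotient (x j) (y j) (d j)) 0)"
    by (simp add: poly_0_coeff_0[symmetric] poly_prod)
  also have "\<dots> = (\<Prod>j<k. 2 * of_nat (d j) * W_form (d j) (x j) (y j))"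
    by (simp add: coeff_0_odd_quotient W_form_def mult.assoc)
  also have "\<dots> = 2 ^ k * (\<Prod>j<k. of_nat (d j)) * W_tensor k d x y"
    by (simp add: prod.distrib W_tensor_def)
  finally show ?thesis .
qed

lemma poly_prod_odd_quotient:
  fixes x y :: "nat \<Rightarrow> 'a::field"
  assumes "s \<noteq> 0"
  shows "poly (\<Prod>j<k. odd_quotient (x j) (y j) (d j)) s = inverse s ^ k * (\<Sum>S\<in>Pow {..<k}.
      (\<Prod>j<k. subset_sign S j) * (\<Prod>j<k. (x j + subset_sign S j * s * y j) ^ d j))"
proof -
  have "s ^ k * poly (\<Prod>j<k. odd_quotient (x j) (y j) (d j)) s
      = (\<Prod>j<k. s * poly (odd_quotient (x j) (y j) (d j)) s)"
    by (simp add: poly_prod prod.distrib)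
  also have "\<dots> = (\<Prod>j<k. (x j + 1 * s * y j) ^ d j - (x j + (- 1) * s * y j) ^ d j)"
    by (simp add: poly_odd_quotient)
  also have "\<dots> = (\<Sum>S\<in>Pow {..<k}.
      (\<Prod>j<k. subset_sign S j) * (\<Prod>j<k. (x j + subset_sign S j * s * y j) ^ d j))"
    by (rule prod_diff_eq_sum_subset_signs[where F = "\<lambda>j t. (x j + t * s * y j) ^ d j"]) simp
  finally show ?thesis
    using assms by (simp add: field_simps)
qed

lemma W_tensor_eq_root_sign_sum:
  fixes x y :: "nat \<Rightarrow> complex"
  assumes d_pos: "\<And>j. j < k \<Longrightarrow> d j > 0" and deg: "(\<Sum>j<k. d j) - k < 2 * N"
  defines "z \<equiv> cis (pi / real N)"
  shows "W_tensor k d x y = (\<Sum>m<N. \<Sum>S\<in>Pow {..<k}.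
      inverse (z ^ m) ^ k * (\<Prod>j<k. subset_sign S j) / (of_nat N * 2 ^ k * (\<Prod>j<k. of_nat (d j)))
        * (\<Prod>j<k. (x j + subset_sign S j * z ^ m * y j) ^ d j))"
proof -
  define B where "B = (\<Prod>j<k. odd_quotient (x j) (y j) (d j))"
  define Q where "Q = of_nat N * 2 ^ k * (\<Prod>j<k. of_nat (d j) :: complex)"
  have "degree B < 2 * N"
    unfolding B_def by (rule le_less_trans[OF degree_prod_odd_quotient[of k d] deg]) (rule d_pos)
  moreover have "poly B (- s) = poly B s" for s
    by (simp add: B_def poly_prod poly_odd_quotient_minus)
  ultimately have "(\<Sum>m<N. poly B (z ^ m)) = of_nat N * coeff B 0"
    unfolding z_def by (rule sum_half_roots_unity_even_poly)
  moreover have "Q \<noteq> 0"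
    using d_pos deg by (auto simp: Q_def)
  ultimately have "W_tensor k d x y = (\<Sum>m<N. poly B (z ^ m)) / Q"
    by (simp add: B_def Q_def coeff_0_prod_odd_quotient field_simps)
  also have "\<dots> = (\<Sum>m<N. \<Sum>S\<in>Pow {..<k}. inverse (z ^ m) ^ k * (\<Prod>j<k. subset_sign S j) / Q
      * (\<Prod>j<k. (x j + subset_sign S j * z ^ m * y j) ^ d j))"
    by (simp add: B_def z_def poly_prod_odd_quotient sum_divide_distrib sum_distrib_left mult_ac)
  finally show ?thesis
    unfolding Q_def .
qed

lemma W_tensor_ps_decomposable:
  assumes "k > 0" and d_pos: "\<And>j. j < k \<Longrightarrow> d j > 0" and deg: "(\<Sum>j<k. d j) - k < 2 * N"
  shows "ps_decomposable k d (W_tensor k d) (N * 2 ^ k)"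
proof -
  define z where "z = cis (pi / real N)"
  define c where "c = (\<lambda>(m, S). inverse (z ^ m) ^ k * (\<Prod>j<k. subset_sign S j)
      / (of_nat N * 2 ^ k * (\<Prod>j<k. of_nat (d j))) :: complex)"
  define \<beta> where "\<beta> = (\<lambda>(m, S) (j :: nat). subset_sign S j * z ^ m :: complex)"
  have "ps_decomposable k d (W_tensor k d) (card ({..<N} \<times> Pow {..<k}))"
  proof (rule ps_decomposable_weighted_sum)
    fix x y :: "nat \<Rightarrow> complex"
    have "W_tensor k d x y = (\<Sum>m<N. \<Sum>S\<in>Pow {..<k}. c (m, S) * (\<Prod>j<k. (x j + \<beta> (m, S) j * y j) ^ d j))"
      by (simp add: W_tensor_eq_root_sign_sum[OF d_pos deg] c_def \<beta>_def z_def mult_ac)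
    then show "W_tensor k d x y = (\<Sum>e\<in>{..<N} \<times> Pow {..<k}. c e * (\<Prod>j<k. (x j + \<beta> e j * y j) ^ d j))"
      by (simp add: sum.cartesian_product case_prod_beta')
  qed (use assms in auto)
  then show ?thesis
    by (simp add: card_cartesian_product card_Pow)
qed

theorem theorem3p6:
  fixes k :: nat and d :: "nat \<Rightarrow> nat"
  assumes "k \<ge> 2"
    and "\<And>j. j < k \<Longrightarrow> d j \<ge> 3"
  shows "ps_rank k d (W_tensor k d) \<le> 2 ^ (k - 1) * (\<Sum>j<k. d j)"
proof -
  define N where "N = ((\<Sum>j<k. d j) - k) div 2 + 1"
  have d_pos: "d j > 0" if "j < k" for j
    using assms(2)[OF that] by simp
  have "ps_rank k d (W_tensor k d) \<le> N * 2 ^ k"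
    by (intro ps_rank_le W_tensor_ps_decomposable d_pos) (use assms(1) in \<open>auto simp: N_def\<close>)
  also have "\<dots> = 2 ^ (k - 1) * (2 * N)"
    using assms(1) by (cases k) simp_all
  also have "\<dots> \<le> 2 ^ (k - 1) * (\<Sum>j<k. d j)"
  proof (rule mult_le_mono2)
    have "k \<le> (\<Sum>j<k. d j)"
      using sum_mono[of "{..<k}" "\<lambda>_. 1" d] d_pos by (simp add: Suc_le_eq)
    then show "2 * N \<le> (\<Sum>j<k. d j)"
      using assms(1) by (simp add: N_def)
  qed
  finally show ?thesis .
qed

end
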